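(* Let $\mathcal{O}$ be the set of $24$-tuples of integers $a_1A_1+a_2A_2$ with $a_1\in\mathbb{Z}$ and $a_2=\pm3^\alpha2^\beta$ for some $\alpha\in\{0,1\}$, $\beta\in\mathbb{N}$, such that $3\nmid\gcd(a_1,a_2)$, where $A_1=(1,0,-1)^8$ and $A_2=(0,1,-1,-1,3,-2,-2,5,-3,-3,7,-4,-4,9,-5,-5,11,-6,-6,13,-7,-7,15,-8)$. Then for every $A\in\mathcal{O}$ and every odd positive integer $m$, the orbit of $S=\mathrm{IAP}(\pi_m(A),\pi_m(A)X_{24})$ is $(3m,3m)$-periodic and the triangles $\nabla S[3\lambda m]$ are balanced in $\mathbb{Z}/m\mathbb{Z}$ for all non-negative integers $\lambda$.
   Context: $\pi_m$ is reduction mod $m$; tuples are row vectors; $X_{24}=(\delta_{r,s}+\delta_{r,25-s})_{1\le r,s\le24}$. For $24$-tuples $A=(a_0,\dots,a_{23})$, $D=(d_0,\dots,d_{23})$, $\mathrm{IAP}(A,D)=(u_j)_{j\in\mathbb{Z}}$ with $u_{24q+r}=a_r+qd_r$. $S[n]=(u_0,\dots,u_{n-1})$. The orbit of $(u_j)$ is $(a_{i,j})_{(i,j)\in\mathbb{N}\times\mathbb{Z}}$ with $a_{0,j}=u_j$, $a_{i,j}=-a_{i-1,j}-a_{i-1,j+1}$; it is $(p,q)$-periodic if $a_{i+q,j}=a_{i,j+p}=a_{i,j}$ for all $(i,j)$. For a finite sequence, $\nabla(u_0,\dots,u_{n-1})=(a_{i,j})_{i+j<n}$ defined by the same rule; it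 is balanced if every element of $\mathbb{Z}/m\mathbb{Z}$ occurs equally often among its entries. *)

theory Defs
  imports Main
begin

text \<open>24-tuples are represented as functions nat => int, index r in 0..23
  (0-based; the paper's a_0..a_23). Elements of Z/mZ are represented by
  their canonical residues in {0..m-1}.\<close>

definition A1 :: "nat \<Rightarrow> int" where
  "A1 r = [1, 0, -1] ! (r mod 3)"

definition A2 :: "nat \<Rightarrow> int" where
  "A2 r = [0,1,-1,-1,3,-2,-2,5,-3,-3,7,-4,-4,9,-5,-5,11,-6,-6,13,-7,-7,15,-8] ! r"

definition tuplesO :: "(nat \<Rightarrow> int) set" where
  "tuplesO = {A. \<exists>a1 a2 :: int. \<exists>\<alpha>::nat. \<exists>\<beta>::nat. \<exists>s::int.
      (s = 1 \<or> s = -1) \<and> \<alpha> \<in> {0,1} \<and> a2 = s * 3^\<alpha> * 2^\<beta> \<and>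
      \<not> (3 dvd gcd a1 a2) \<and> A = (\<lambda>r. a1 * A1 r + a2 * A2 r)}"

definition pim :: "int \<Rightarrow> (nat \<Rightarrow> int) \<Rightarrow> (nat \<Rightarrow> int)" where
  "pim m A = (\<lambda>r. A r mod m)"

definition X24 :: "nat \<Rightarrow> nat \<Rightarrow> int" where
  "X24 r s = (if r = s then 1 else 0) + (if r = 23 - s then 1 else 0)"

definition mulX24 :: "int \<Rightarrow> (nat \<Rightarrow> int) \<Rightarrow> (nat \<Rightarrow> int)" where
  "mulX24 m A = (\<lambda>s. (\<Sum>r<24. A r * X24 r s) mod m)"

definition IAP :: "int \<Rightarrow> (nat \<Rightarrow> int) \<Rightarrow> (nat \<Rightarrow> int) \<Rightarrow> int \<Rightarrow> int" where
  "IAP m A D j = (A (nat (j mod 24)) + (j div 24) * D (nat (j mod 24))) mod m"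

primrec orbit :: "int \<Rightarrow> (int \<Rightarrow> int) \<Rightarrow> nat \<Rightarrow> int \<Rightarrow> int" where
  "orbit m u 0 j = u j mod m"
| "orbit m u (Suc i) j = (- orbit m u i j - orbit m u i (j + 1)) mod m"

definition periodic_orbit :: "int \<Rightarrow> (int \<Rightarrow> int) \<Rightarrow> int \<Rightarrow> nat \<Rightarrow> bool" where
  "periodic_orbit m u p q \<longleftrightarrow>
     (\<forall>i j. orbit m u (i + q) j = orbit m u i j \<and> orbit m u i (j + p) = orbit m u i j)"

definition prefix_seq :: "(int \<Rightarrow> int) \<Rightarrow> nat \<Rightarrow> int list" where
  "prefix_seq u n = map (\<lambda>j. u (int j)) [0..<n]"

text \<open>Triangle nabla(u_0..u_{n-1}) over Z/mZ: entries tri m xs i j for i + j < length xs.\<close>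
primrec tri :: "int \<Rightarrow> int list \<Rightarrow> nat \<Rightarrow> nat \<Rightarrow> int" where
  "tri m xs 0 j = (xs ! j) mod m"
| "tri m xs (Suc i) j = (- tri m xs i j - tri m xs i (j + 1)) mod m"

definition balanced :: "int \<Rightarrow> int list \<Rightarrow> bool" where
  "balanced m xs \<longleftrightarrow>
     (\<forall>x \<in> {0..<m}. \<forall>y \<in> {0..<m}.
        card {(i, j). i + j < length xs \<and> tri m xs i j = x}
      = card {(i, j). i + j < length xs \<and> tri m xs i j = y})"

end

theory Submission
  imports Defs "HOL-Computational_Algebra.Primes"
begin

(* Over the integers, the orbit of IAP(A, A X_24) for A = a1 A1 + a2 A2 has the closed form
     a_{i,j} = a1 A1(d) + a2 level(i, j),   d = (j - i) mod 3,
   where level is affine in i and (j - i) div 3 on each class d.  Moving i or j by 3m changes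
   level by a multiple of m, which gives the (3m, 3m)-periodicity.

   For the balance, split the triangle of side n = 3 lam m into the three classes d.  The
   rotation (i, j, k) -> (j, k, i) of the triangle (k = n - 1 - i - j) maps class d + 1 onto
   class d and preserves level mod m, and class 0 is a lattice triangle in which level takes
   every residue mod m equally often, say W times.  Hence class d contributes
   W * #{r mod m. c_d + a2 r = x} with c_d = a1, 0, -a1.  These three counts add up to 3: each
   is 1 if a2 is a unit mod m, and otherwise 3 divides a2 and m but not a1, so exactly one of
   them is 3. *)

section \<open>The orbit over the integers\<close>

lemma int_mod3_cases:
  obtains e where "(x::int) = 3 * e" | e where "x = 3 * e + 1" | e where "x = 3 * e + 2"
proof -
  have "x = 3 * (x div 3) + x mod 3" by simp
  moreover have "x mod 3 = 0 \<or> x mod 3 = 1 \<or> x mod 3 = 2" by presburger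
  ultimately show ?thesis using that by (metis add.right_neutral)
qed

definition level :: "nat \<Rightarrow> int \<Rightarrow> int" where
  "level i j = (let d = j - int i; e = d div 3 in
     if d mod 3 = 0 then - e else if d mod 3 = 1 then int i + 2 * e + 1 else - (int i + e + 1))"

definition diag_class :: "nat \<Rightarrow> int \<Rightarrow> nat" where
  "diag_class i j = nat ((j - int i) mod 3)"

definition orbit_value :: "int \<Rightarrow> int \<Rightarrow> nat \<Rightarrow> int \<Rightarrow> int" where
  "orbit_value a1 a2 i j = a1 * A1 (diag_class i j) + a2 * level i j"

lemma level_3e: "j - int i = 3 * e \<Longrightarrow> level i j = - e"
  unfolding level_def by simp

lemma level_3e1: "j - int i = 3 * e + 1 \<Longrightarrow> level i j = int i + 2 * e + 1"
  unfolding level_def by simp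

lemma level_3e2: "j - int i = 3 * e + 2 \<Longrightarrow> level i j = - (int i + e + 1)"
  unfolding level_def by simp

lemma diag_class_3e: "j - int i = 3 * e \<Longrightarrow> diag_class i j = 0"
  by (simp add: diag_class_def)

lemma diag_class_3e1: "j - int i = 3 * e + 1 \<Longrightarrow> diag_class i j = 1"
  by (simp add: diag_class_def)

lemma diag_class_3e2: "j - int i = 3 * e + 2 \<Longrightarrow> diag_class i j = 2"
  by (simp add: diag_class_def)

lemma diag_class_eq_iff: "diag_class i j = d \<longleftrightarrow> (j - int i) mod 3 = int d"
  by (auto simp: diag_class_def nat_eq_iff)

lemma level_Suc: "level (Suc i) j = - level i j - level i (j + 1)"
proof (cases "j - int i" rule: int_mod3_cases)
  case (1 e)
  then show ?thesis
    using level_3e2 [of j "Suc i" "e - 1"] level_3e [of j i e] level_3e1 [of "j + 1" i e]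
    by simp
next
  case (2 e)
  then show ?thesis
    using level_3e [of j "Suc i" e] level_3e1 [of j i e] level_3e2 [of "j + 1" i e]
    by simp
next
  case (3 e)
  then show ?thesis
    using level_3e1 [of j "Suc i" e] level_3e2 [of j i e] level_3e [of "j + 1" i "e + 1"]
    by simp
qed

lemma A1_diag_class_Suc:
  "A1 (diag_class (Suc i) j) = - A1 (diag_class i j) - A1 (diag_class i (j + 1))"
proof (cases "j - int i" rule: int_mod3_cases)
  case (1 e)
  then show ?thesis
    using diag_class_3e2 [of j "Suc i" "e - 1"]
      diag_class_3e [of j i e] diag_class_3e1 [of "j + 1" i e]
    by (simp add: A1_def)
next
  case (2 e)
  then show ?thesis
    using diag_class_3e [of j "Suc i" e] diag_class_3e1 [of j i e] diag_class_3e2 [of "j + 1" i e]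
    by (simp add: A1_def)
next
  case (3 e)
  then show ?thesis
    using diag_class_3e1 [of j "Suc i" e]
      diag_class_3e2 [of j i e] diag_class_3e [of "j + 1" i "e + 1"]
    by (simp add: A1_def)
qed

lemma orbit_value_Suc:
  "orbit_value a1 a2 (Suc i) j = - orbit_value a1 a2 i j - orbit_value a1 a2 i (j + 1)"
  unfolding orbit_value_def A1_diag_class_Suc level_Suc by (simp add: algebra_simps)

lemma level_add_col:
  "level i (j + 3 * t) = level i j + t * (if (j - int i) mod 3 = 1 then 2 else -1)"
proof (cases "j - int i" rule: int_mod3_cases)
  case (1 e)
  then show ?thesis
    using level_3e [of j i e] level_3e [of "j + 3 * t" i "e + t"]
    by simp
next
  case (2 e)
  then show ?thesis
    using level_3e1 [of j i e] level_3e1 [of "j + 3 * t" i "e + t"]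
    by simp
next
  case (3 e)
  then show ?thesis
    using level_3e2 [of j i e] level_3e2 [of "j + 3 * t" i "e + t"]
    by simp
qed

lemma level_add_row:
  "level (i + 3 * t) j = level i j + int t * (if (j - int i) mod 3 = 2 then -2 else 1)"
proof (cases "j - int i" rule: int_mod3_cases)
  case (1 e)
  then show ?thesis
    using level_3e [of j i e] level_3e [of j "i + 3 * t" "e - int t"]
    by simp
next
  case (2 e)
  then show ?thesis
    using level_3e1 [of j i e] level_3e1 [of j "i + 3 * t" "e - int t"]
    by simp
next
  case (3 e)
  then show ?thesis
    using level_3e2 [of j i e] level_3e2 [of j "i + 3 * t" "e - int t"]
    by simp
qed

lemma diag_class_add_col: "diag_class i (j + 3 * t) = diag_class i j"
  unfolding diag_class_def by (metis add_diff_eq diff_add_eq mod_mult_self2)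

lemma diag_class_add_row: "diag_class (i + 3 * t) j = diag_class i j"
proof -
  have "(j - int (i + 3 * t)) mod 3 = (j - int i) mod 3" by presburger
  then show ?thesis by (simp add: diag_class_def)
qed

lemma orbit_value_add_col:
  "orbit_value a1 a2 i (j + 3 * m) mod m = orbit_value a1 a2 i j mod m"
proof -
  have "orbit_value a1 a2 i (j + 3 * m)
      = orbit_value a1 a2 i j + m * (a2 * (if (j - int i) mod 3 = 1 then 2 else -1))"
    unfolding orbit_value_def diag_class_add_col level_add_col by (simp add: algebra_simps)
  then show ?thesis by simp
qed

lemma orbit_value_add_row:
  "orbit_value a1 a2 (i + 3 * t) j mod int t = orbit_value a1 a2 i j mod int t"
proof -
  have "orbit_value a1 a2 (i + 3 * t) j
      = orbit_value a1 a2 i j + int t * (a2 * (if (j - int i) mod 3 = 2 then -2 else 1))"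
    unfolding orbit_value_def diag_class_add_row level_add_row by (simp add: algebra_simps)
  then show ?thesis by simp
qed

lemma orbit_eq_mod:
  assumes rec: "\<And>i j. f (Suc i) j = - f i j - f i (j + 1)"
    and init: "\<And>j. u j mod m = f 0 j mod m"
  shows "orbit m u i j = f i j mod m"
proof (induction i arbitrary: j)
  case 0
  show ?case using init by simp
next
  case (Suc i)
  have "orbit m u (Suc i) j = (- (f i j mod m) - f i (j + 1) mod m) mod m"
    using Suc by simp
  also have "\<dots> = (- ((f i j mod m + f i (j + 1) mod m) mod m)) mod m"
    by (simp add: mod_minus_eq)
  also have "\<dots> = (- f i j - f i (j + 1)) mod m"
    by (simp add: mod_add_eq mod_minus_eq)
  finally show ?case by (simp add: rec)
qed

lemma tri_prefix_seq:
  "i + j < n \<Longrightarrow> tri m (prefix_seq u n) i j = orbit m u i (int j)"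
proof (induction i arbitrary: j)
  case 0
  then show ?case by (simp add: prefix_seq_def)
next
  case (Suc i)
  then show ?case by (simp add: add.commute)
qed

section \<open>The initial row\<close>

lemma A2_eq_level: "r < 24 \<Longrightarrow> A2 r = level 0 (int r)"
proof -
  have "\<forall>r \<in> set [0..<24]. A2 r = level 0 (int r)"
    by (simp add: A2_def level_def upt_rec)
  then show "r < 24 \<Longrightarrow> ?thesis" by simp
qed

lemma A1_diag_class_0: "A1 (diag_class 0 (int r)) = A1 r"
  by (simp add: A1_def diag_class_def nat_mod_distrib)

lemma A1_add_mirror: "r < 24 \<Longrightarrow> A1 r + A1 (23 - r) = 0"
proof -
  have "\<forall>r \<in> set [0..<24]. A1 r + A1 (23 - r) = 0"
    by (simp add: A1_def upt_rec)
  then show "r < 24 \<Longrightarrow> ?thesis" by simp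
qed

lemma A2_add_mirror: "r < 24 \<Longrightarrow> A2 r + A2 (23 - r) = 8 * (if r mod 3 = 1 then 2 else -1)"
proof -
  have "\<forall>r \<in> set [0..<24]. A2 r + A2 (23 - r) = 8 * (if r mod 3 = 1 then 2 else -1)"
    by (simp add: A2_def upt_rec)
  then show "r < 24 \<Longrightarrow> ?thesis" by simp
qed

lemma mulX24_eq: "s < 24 \<Longrightarrow> mulX24 m A s = (A s + A (23 - s)) mod m"
proof -
  assume s: "s < 24"
  have "(\<Sum>r<24. A r * X24 r s)
      = (\<Sum>r<24. if r = s then A r else 0) + (\<Sum>r<24. if r = 23 - s then A r else 0)"
    unfolding sum.distrib [symmetric] by (rule sum.cong) (auto simp: X24_def)
  also have "\<dots> = A s + A (23 - s)" using s by (simp add: sum.delta')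
  finally show ?thesis by (simp add: mulX24_def)
qed

lemma IAP_entry_eq_orbit_value:
  assumes r: "r < 24"
  shows "(a1 * A1 r + a2 * A2 r)
      + q * ((a1 * A1 r + a2 * A2 r) + (a1 * A1 (23 - r) + a2 * A2 (23 - r)))
    = orbit_value a1 a2 0 (24 * q + int r)"
proof -
  define \<zeta> :: int where "\<zeta> = (if r mod 3 = 1 then 2 else -1)"
  have "int r mod 3 = 1 \<longleftrightarrow> r mod 3 = 1" by presburger
  then have "orbit_value a1 a2 0 (int r + 3 * (8 * q))
      = orbit_value a1 a2 0 (int r) + q * (a2 * (8 * \<zeta>))"
    unfolding orbit_value_def diag_class_add_col level_add_col \<zeta>_def by (simp add: algebra_simps)
  moreover have "(a1 * A1 r + a2 * A2 r)
        + q * ((a1 * A1 r + a2 * A2 r) + (a1 * A1 (23 - r) + a2 * A2 (23 - r)))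
      = (a1 * A1 r + a2 * A2 r) + q * (a1 * (A1 r + A1 (23 - r)) + a2 * (A2 r + A2 (23 - r)))"
    by (simp add: algebra_simps)
  ultimately show ?thesis
    using A1_add_mirror [OF r] A2_add_mirror [OF r] A2_eq_level [OF r]
    by (simp add: orbit_value_def A1_diag_class_0 \<zeta>_def add.commute)
qed

lemma IAP_initial_row:
  assumes "A = (\<lambda>r. a1 * A1 r + a2 * A2 r)"
  shows "IAP m (pim m A) (mulX24 m (pim m A)) j mod m = orbit_value a1 a2 0 j mod m"
proof -
  define r where "r = nat (j mod 24)"
  define q where "q = j div 24"
  have r: "r < 24" unfolding r_def by simp
  have j: "j = 24 * q + int r" unfolding r_def q_def by simp
  have "mulX24 m (pim m A) r = (A r mod m + A (23 - r) mod m) mod m"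
    using mulX24_eq [OF r] by (simp add: pim_def)
  then have "IAP m (pim m A) (mulX24 m (pim m A)) j
      = (A r mod m + q * ((A r mod m + A (23 - r) mod m) mod m)) mod m"
    unfolding IAP_def by (simp add: pim_def flip: r_def q_def)
  also have "\<dots> = (A r + q * (A r + A (23 - r))) mod m"
    by (metis mod_add_eq mod_add_right_eq mod_mult_right_eq)
  also have "A r + q * (A r + A (23 - r)) = orbit_value a1 a2 0 j"
    unfolding j assms by (rule IAP_entry_eq_orbit_value [OF r])
  finally show ?thesis by simp
qed

section \<open>Counting residues\<close>

lemma card_residue_interval_1:
  fixes m g c r a :: int
  assumes m: "m > 0" and cop: "coprime g m"
  shows "card {k \<in> {a..<a + m}. (c + g * k) mod m = r mod m} = 1"
proof -
  define f where "f k = (c + g * k) mod m" for k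
  have inj: "inj_on f {a..<a + m}"
  proof (rule inj_onI)
    fix k k' assume k: "k \<in> {a..<a + m}" "k' \<in> {a..<a + m}" and "f k = f k'"
    then have "m dvd g * (k - k')"
      by (simp add: f_def mod_eq_dvd_iff algebra_simps)
    then have "m dvd k - k'"
      using cop by (simp add: coprime_commute coprime_dvd_mult_right_iff)
    then have "m dvd (k - a) - (k' - a)" by simp
    then have "(k - a) mod m = (k' - a) mod m" by (simp only: mod_eq_dvd_iff)
    then show "k = k'" using k by simp
  qed
  have "f ` {a..<a + m} \<subseteq> {0..<m}" using m by (auto simp: f_def)
  moreover have "card (f ` {a..<a + m}) = card {0..<m}"
    using card_image [OF inj] by simp
  ultimately have "f ` {a..<a + m} = {0..<m}"
    by (intro card_subset_eq) auto
  then obtain k0 where k0: "k0 \<in> {a..<a + m}" "f k0 = r mod m"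
    using m by (metis atLeastLessThan_iff imageE pos_mod_bound pos_mod_sign)
  have "k = k0" if "k \<in> {a..<a + m}" "f k = r mod m" for k
    using inj_onD [OF inj _ that(1) k0(1)] that(2) k0(2) by simp
  then have "{k \<in> {a..<a + m}. f k = r mod m} = {k0}"
    using k0 by blast
  then show ?thesis by (simp add: f_def)
qed

lemma card_residue_interval:
  fixes m g c r a :: int
  assumes m: "m > 0" and cop: "coprime g m"
  shows "card {k \<in> {a..<a + int lam * m}. (c + g * k) mod m = r mod m} = lam"
proof (induction lam)
  case 0
  then show ?case by simp
next
  case (Suc lam)
  let ?P = "\<lambda>k. (c + g * k) mod m = r mod m"
  define L where "L = int lam * m"
  have fin: "finite {k \<in> {x..<y}. ?P k}" for x y
    by (rule finite_subset [of _ "{x..<y}"]) auto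
  have "0 \<le> L" "int (Suc lam) * m = L + m"
    using m by (simp_all add: L_def algebra_simps)
  then have split: "{k \<in> {a..<a + int (Suc lam) * m}. ?P k}
      = {k \<in> {a..<a + L}. ?P k} \<union> {k \<in> {a + L..<a + L + m}. ?P k}"
    using m by auto
  have "card {k \<in> {a..<a + int (Suc lam) * m}. ?P k}
      = card {k \<in> {a..<a + L}. ?P k} + card {k \<in> {a + L..<a + L + m}. ?P k}"
    unfolding split using fin by (intro card_Un_disjoint) auto
  moreover have "card {k \<in> {a + L..<a + L + m}. ?P k} = 1"
    by (rule card_residue_interval_1 [OF m cop])
  ultimately show ?case
    using Suc by (simp add: L_def)
qed

lemma card_affine_residue:
  fixes g :: "'a \<Rightarrow> int"
  assumes fin: "finite S" and m: "m > 0"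
    and equi: "\<And>r. card {s \<in> S. g s mod m = r mod m} = W"
  shows "card {s \<in> S. (c + a * g s) mod m = x} = W * card {r \<in> {0..<m}. (c + a * r) mod m = x}"
proof -
  let ?R = "{r \<in> {0..<m}. (c + a * r) mod m = x}"
  have reduce: "(c + a * (k mod m)) mod m = (c + a * k) mod m" for k
    by (metis mod_add_right_eq mod_mult_right_eq)
  have finR: "finite ?R" by (rule finite_subset [of _ "{0..<m}"]) auto
  have fiber: "{s \<in> S. (c + a * g s) mod m = x} = (\<Union>r \<in> ?R. {s \<in> S. g s mod m = r})"
  proof (intro equalityI subsetI)
    fix s assume s: "s \<in> {s \<in> S. (c + a * g s) mod m = x}"
    then have "g s mod m \<in> ?R" using m reduce [of "g s"] by auto
    then show "s \<in> (\<Union>r \<in> ?R. {s \<in> S. g s mod m = r})" using s by blast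
  next
    fix s assume "s \<in> (\<Union>r \<in> ?R. {s \<in> S. g s mod m = r})"
    then show "s \<in> {s \<in> S. (c + a * g s) mod m = x}" using reduce [of "g s"] by auto
  qed
  have "card {s \<in> S. (c + a * g s) mod m = x} = (\<Sum>r \<in> ?R. card {s \<in> S. g s mod m = r})"
    unfolding fiber by (rule card_UN_disjoint) (use finR in \<open>auto simp: fin\<close>)
  also have "\<dots> = (\<Sum>r \<in> ?R. W)"
  proof (rule sum.cong)
    fix r assume "r \<in> ?R"
    then show "card {s \<in> S. g s mod m = r} = W" using equi [of r] by simp
  qed simp
  finally show ?thesis by simp
qed

lemma card_residue_coprime:
  fixes m a c x :: int
  assumes m: "m > 0" and cop: "coprime a m" and x: "0 \<le> x" "x < m"
  shows "card {r \<in> {0..<m}. (c + a * r) mod m = x} = 1"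
  using card_residue_interval_1 [OF m cop, of 0 c x] x by simp

lemma card_residue_mult_3:
  fixes m m' b c x :: int
  assumes m: "m = 3 * m'" "m' > 0" and cop: "coprime b m'" and x: "0 \<le> x" "x < m"
  shows "card {r \<in> {0..<m}. (c + 3 * b * r) mod m = x} = (if 3 dvd x - c then 3 else 0)"
proof (cases "3 dvd x - c")
  case True
  then obtain w where w: "x - c = 3 * w" by blast
  have "(c + 3 * b * r) mod m = x \<longleftrightarrow> (0 + b * r) mod m' = w mod m'" for r
  proof -
    have "(c + 3 * b * r) mod m = x \<longleftrightarrow> m dvd (c + 3 * b * r) - x"
      using x by (simp add: mod_eq_dvd_iff [symmetric])
    also have "(c + 3 * b * r) - x = 3 * (b * r - w)" using w by (simp add: algebra_simps)
    also have "m dvd 3 * (b * r - w) \<longleftrightarrow> m' dvd b * r - w"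
      unfolding m(1) by (rule dvd_times_left_cancel_iff) simp
    finally show ?thesis by (simp add: mod_eq_dvd_iff)
  qed
  then have "{r \<in> {0..<m}. (c + 3 * b * r) mod m = x}
      = {r \<in> {0..<0 + int 3 * m'}. (0 + b * r) mod m' = w mod m'}"
    using m by auto
  also have "card \<dots> = 3"
    by (rule card_residue_interval [OF m(2) cop])
  finally show ?thesis using True by simp
next
  case False
  have "(c + 3 * b * r) mod m \<noteq> x" for r
  proof
    assume "(c + 3 * b * r) mod m = x"
    then have "m dvd (c + 3 * b * r) - x" using x by (simp add: mod_eq_dvd_iff [symmetric])
    then have "3 dvd (c + 3 * b * r) - x" using m(1) by (meson dvd_trans dvd_triv_left)
    then have "3 dvd (c - x) + 3 * (b * r)" by (simp add: algebra_simps)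
    then have "3 dvd x - c" by (simp add: dvd_add_left_iff dvd_diff_commute)
    with False show False ..
  qed
  then show ?thesis using False by simp
qed

lemma card_residue_sum_eq_3:
  fixes m a1 a2 x s :: int
  assumes m: "m > 0" and odd: "odd m" and x: "0 \<le> x" "x < m"
    and s: "s = 1 \<or> s = -1" and \<alpha>: "\<alpha> \<in> {0, 1}" and a2: "a2 = s * 3 ^ \<alpha> * 2 ^ \<beta>"
    and gcd: "\<not> 3 dvd gcd a1 a2"
  shows "card {r \<in> {0..<m}. (a1 + a2 * r) mod m = x} + card {r \<in> {0..<m}. (0 + a2 * r) mod m = x}
    + card {r \<in> {0..<m}. (- a1 + a2 * r) mod m = x} = 3"
proof (cases "coprime a2 m")
  case True
  then show ?thesis
    using card_residue_coprime [OF m True x, of a1] card_residue_coprime [OF m True x, of 0]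
      card_residue_coprime [OF m True x, of "- a1"]
    by (simp only:)
next
  case False
  have cop: "coprime (s * 2 ^ \<beta>) m"
    using s odd by (auto simp: coprime_commute)
  then have "\<alpha> = 1" using False \<alpha> a2 by auto
  then have a2': "a2 = 3 * (s * 2 ^ \<beta>)" using a2 by simp
  have "\<not> coprime 3 m" using False cop odd unfolding a2' by simp
  then obtain m' where m': "m = 3 * m'"
    using prime_imp_coprime [of 3 m] by auto
  have m'_pos: "m' > 0" using m m' by simp
  have cop': "coprime (s * 2 ^ \<beta>) m'" using cop m' by simp
  have "\<not> 3 dvd a1" using gcd a2' by simp
  then have "(if 3 dvd x - a1 then 3 else 0) + (if 3 dvd x - 0 then 3 else 0)
      + (if 3 dvd x - (- a1) then 3 else 0) = (3::nat)"
    by presburger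
  then show ?thesis
    unfolding a2'
    using card_residue_mult_3 [OF m' m'_pos cop' x, of a1]
      card_residue_mult_3 [OF m' m'_pos cop' x, of 0]
      card_residue_mult_3 [OF m' m'_pos cop' x, of "- a1"]
    by (simp only:)
qed

section \<open>Equidistribution of the level on the triangle\<close>

(* Class 0 of the triangle {i + j < 3 M} in the coordinates y = j, t = level i j = (i - j) / 3. *)
definition lattice_triangle :: "int \<Rightarrow> (int \<times> int) set" where
  "lattice_triangle M = {(y, t). 0 \<le> y \<and> 0 \<le> y + 3 * t \<and> 2 * y + 3 * t < 3 * M}"

lemma finite_lattice_triangle: "finite (lattice_triangle M)"
proof (rule finite_subset)
  show "lattice_triangle M \<subseteq> {0..3 * M} \<times> {-M..M}"
    unfolding lattice_triangle_def by auto
qed simp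

lemma card_lattice_triangle_edge_columns:
  assumes m: "m > 0" and M: "M = int lam * m"
  shows "card {(y, t) \<in> lattice_triangle M. y < 2 \<and> t mod m = r mod m} = 2 * lam"
proof -
  have "{(y, t) \<in> lattice_triangle M. y < 2 \<and> t mod m = r mod m}
      = {0, 1} \<times> {t \<in> {0..<0 + int lam * m}. (0 + 1 * t) mod m = r mod m}"
    unfolding lattice_triangle_def M by auto
  then show ?thesis
    using card_residue_interval [OF m, of 1 0 lam 0 r] by (simp add: card_cartesian_product)
qed

lemma card_lattice_triangle_slanted_edges:
  assumes m: "m > 0" and odd: "odd m" and M: "M = int lam * m"
  shows "card {(y, t) \<in> lattice_triangle M. (y + 3 * t = 0 \<or> 2 * y + 3 * t = 3 * M - 1)
    \<and> t mod m = r mod m} = 2 * lam"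
proof -
  define T where "T = {t \<in> {1 - M..<1 - M + int lam * m}. (0 + 1 * t) mod m = r mod m}"
  define K where "K = {k \<in> {0..<0 + int lam * m}. ((M - 1) + (-2) * k) mod m = r mod m}"
  have "{(y, t) \<in> lattice_triangle M. (y + 3 * t = 0 \<or> 2 * y + 3 * t = 3 * M - 1)
        \<and> t mod m = r mod m}
      = (\<lambda>t. (-3 * t, t)) ` T \<union> (\<lambda>k. (1 + 3 * k, M - 1 - 2 * k)) ` K"
  proof (intro equalityI subsetI)
    fix e assume "e \<in> {(y, t) \<in> lattice_triangle M. (y + 3 * t = 0 \<or> 2 * y + 3 * t = 3 * M - 1)
      \<and> t mod m = r mod m}"
    then obtain y t where e: "e = (y, t)" "0 \<le> y" "0 \<le> y + 3 * t" "2 * y + 3 * t < 3 * M"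
      "y + 3 * t = 0 \<or> 2 * y + 3 * t = 3 * M - 1" "t mod m = r mod m"
      unfolding lattice_triangle_def by auto
    show "e \<in> (\<lambda>t. (-3 * t, t)) ` T \<union> (\<lambda>k. (1 + 3 * k, M - 1 - 2 * k)) ` K"
    proof (cases "y + 3 * t = 0")
      case True
      then have "e = (-3 * t, t)" "t \<in> T" using e M by (auto simp: T_def)
      then show ?thesis by blast
    next
      case False
      then have "2 * y + 3 * t = 3 * M - 1" using e(5) by simp
      define k where "k = y + t - M"
      have "y = 1 + 3 * k" "t = M - 1 - 2 * k"
        using \<open>2 * y + 3 * t = 3 * M - 1\<close> k_def by linarith+
      then have "e = (1 + 3 * k, M - 1 - 2 * k)" "k \<in> K" using e M by (auto simp: K_def)
      then show ?thesis by blast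
    qed
  qed (use M in \<open>auto simp: T_def K_def lattice_triangle_def algebra_simps\<close>)
  moreover have "(\<lambda>t. (-3 * t, t)) ` T \<inter> (\<lambda>k. (1 + 3 * k, M - 1 - 2 * k)) ` K = {}"
    by auto presburger
  moreover have "finite T" "finite K"
    unfolding T_def K_def by (auto intro: finite_subset [of _ "{_..<_}"])
  moreover have "card T = lam"
    unfolding T_def by (rule card_residue_interval [OF m]) simp
  moreover have "card K = lam"
    unfolding K_def
    by (rule card_residue_interval [OF m]) (use odd in \<open>simp add: coprime_commute\<close>)
  ultimately show ?thesis
    by (simp add: card_Un_disjoint card_image inj_on_def)
qed

lemma card_lattice_triangle_shift:
  "card {(y, t) \<in> lattice_triangle M. 2 \<le> y \<and> t mod m = r mod m}
    = card {(y, t) \<in> lattice_triangle M. \<not> (y + 3 * t = 0 \<or> 2 * y + 3 * t = 3 * M - 1)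
        \<and> t mod m = (r + 1) mod m}"
  (is "card ?A = card ?B")
proof (rule bij_betw_same_card [of "\<lambda>(y, t). (y - 2, t + 1)"],
    rule bij_betw_byWitness [where f' = "\<lambda>(y, t). (y + 2, t - 1)"])
  have shift: "(t + 1) mod m = (r + 1) mod m \<longleftrightarrow> t mod m = r mod m" for t
    by (simp add: mod_eq_dvd_iff)
  show "(\<lambda>(y, t). (y - 2, t + 1)) ` ?A \<subseteq> ?B"
  proof (rule image_subsetI)
    fix e assume "e \<in> ?A"
    then obtain y t where "e = (y, t)" "(y, t) \<in> lattice_triangle M" "2 \<le> y" "t mod m = r mod m"
      by auto
    then show "(\<lambda>(y, t). (y - 2, t + 1)) e \<in> ?B"
      using shift [of t] unfolding lattice_triangle_def by simp
  qed
  show "(\<lambda>(y, t). (y + 2, t - 1)) ` ?B \<subseteq> ?A"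
  proof (rule image_subsetI)
    fix e assume "e \<in> ?B"
    then obtain y t where "e = (y, t)" "(y, t) \<in> lattice_triangle M"
      "\<not> (y + 3 * t = 0 \<or> 2 * y + 3 * t = 3 * M - 1)" "t mod m = (r + 1) mod m"
      by auto
    then show "(\<lambda>(y, t). (y + 2, t - 1)) e \<in> ?A"
      using shift [of "t - 1"] unfolding lattice_triangle_def by simp
  qed
qed auto

(* The shift (y, t) -> (y - 2, t + 1) matches residue r with residue r + 1, except for the
   strip y < 2 and the two slanted edges, which both contain 2 lam points of every residue. *)
lemma card_lattice_triangle_residue_Suc:
  assumes m: "m > 0" and odd: "odd m" and M: "M = int lam * m"
  shows "card {(y, t) \<in> lattice_triangle M. t mod m = r mod m}
    = card {(y, t) \<in> lattice_triangle M. t mod m = (r + 1) mod m}"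
proof -
  let ?N = "\<lambda>P. {(y, t) \<in> lattice_triangle M. P y t}"
  let ?edge = "\<lambda>y t. y + 3 * t = 0 \<or> 2 * y + 3 * t = 3 * M - 1"
  have fin: "finite (?N P)" for P
    by (rule finite_subset [OF _ finite_lattice_triangle]) auto
  have split:
    "card (?N R) = card (?N (\<lambda>y t. \<not> Q y t \<and> R y t)) + card (?N (\<lambda>y t. Q y t \<and> R y t))"
    for Q R
  proof -
    have "?N R = ?N (\<lambda>y t. \<not> Q y t \<and> R y t) \<union> ?N (\<lambda>y t. Q y t \<and> R y t)" by auto
    then show ?thesis by (simp add: card_Un_disjoint [OF fin fin] disjoint_iff)
  qed
  have "card (?N (\<lambda>y t. t mod m = r mod m))
      = card (?N (\<lambda>y t. 2 \<le> y \<and> t mod m = r mod m)) + 2 * lam"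
    using split [where Q = "\<lambda>y t. y < 2" and R = "\<lambda>y t. t mod m = r mod m"]
      card_lattice_triangle_edge_columns [OF m M, of r]
    by (simp add: not_less)
  also have "\<dots> = card (?N (\<lambda>y t. \<not> ?edge y t \<and> t mod m = (r + 1) mod m)) + 2 * lam"
    by (simp only: card_lattice_triangle_shift)
  also have "\<dots> = card (?N (\<lambda>y t. t mod m = (r + 1) mod m))"
    using split [where Q = ?edge and R = "\<lambda>y t. t mod m = (r + 1) mod m"]
      card_lattice_triangle_slanted_edges [OF m odd M, of "r + 1"]
    by simp
  finally show ?thesis .
qed

lemma card_lattice_triangle_residue:
  assumes m: "m > 0" and odd: "odd m" and M: "M = int lam * m"
  shows "card {(y, t) \<in> lattice_triangle M. t mod m = r mod m}
    = card {(y, t) \<in> lattice_triangle M. t mod m = 0}"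
proof (induction r rule: int_induct [where k = 0])
  case base
  then show ?case by simp
next
  case (step1 r)
  then show ?case using card_lattice_triangle_residue_Suc [OF m odd M, of r] by simp
next
  case (step2 r)
  then show ?case using card_lattice_triangle_residue_Suc [OF m odd M, of "r - 1"] by simp
qed

lemma card_triangle_class0_level:
  assumes n: "n = 3 * M"
  shows "card {(i, j). i + j < n \<and> diag_class i (int j) = 0 \<and> level i (int j) mod m = r}
    = card {(y, t) \<in> lattice_triangle (int M). t mod m = r}"
    (is "card ?S = card ?T")
proof (rule bij_betw_same_card [of "\<lambda>(i, j). (int j, level i (int j))"],
    rule bij_betw_byWitness [where f' = "\<lambda>(y, t). (nat (y + 3 * t), nat y)"])
  have class0: "int i = int j + 3 * level i (int j)" if "diag_class i (int j) = 0" for i j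
  proof -
    have "(int j - int i) mod 3 = 0"
      using that by (simp add: diag_class_eq_iff)
    then have "int j - int i = 3 * ((int j - int i) div 3)" by presburger
    then show ?thesis using level_3e by fastforce
  qed
  show "\<forall>p \<in> ?S. (\<lambda>(y, t). (nat (y + 3 * t), nat y)) ((\<lambda>(i, j). (int j, level i (int j))) p) = p"
    by (auto dest!: class0 [symmetric])
  show "(\<lambda>(i, j). (int j, level i (int j))) ` ?S \<subseteq> ?T"
  proof (rule image_subsetI)
    fix p assume "p \<in> ?S"
    then obtain i j where p: "p = (i, j)" "i + j < n" "diag_class i (int j) = 0"
      "level i (int j) mod m = r"
      by auto
    moreover have "int i = int j + 3 * level i (int j)"
      using class0 [OF p(3)] .
    ultimately show "(\<lambda>(i, j). (int j, level i (int j))) p \<in> ?T"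
      using n by (simp add: lattice_triangle_def)
  qed
  have "level (nat (y + 3 * t)) (int (nat y)) = t" "diag_class (nat (y + 3 * t)) (int (nat y)) = 0"
    if "(y, t) \<in> lattice_triangle (int M)" for y t
    using that level_3e [of y "nat (y + 3 * t)" "- t"]
    by (auto simp: lattice_triangle_def diag_class_def)
  then show "\<forall>p \<in> ?T. (\<lambda>(i, j). (int j, level i (int j))) ((\<lambda>(y, t). (nat (y + 3 * t), nat y)) p) = p"
    "(\<lambda>(y, t). (nat (y + 3 * t), nat y)) ` ?T \<subseteq> ?S"
    using n by (auto simp: lattice_triangle_def)
qed

(* In barycentric coordinates (i, j, k) with k = n - 1 - i - j, this is (i, j, k) -> (j, k, i). *)
definition rotate_triangle :: "nat \<Rightarrow> nat \<times> nat \<Rightarrow> nat \<times> nat" where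
  "rotate_triangle n = (\<lambda>(i, j). (j, n - 1 - i - j))"

lemma diag_class_rotate:
  assumes "i + j < n" and "3 dvd n"
  shows "diag_class j (int (n - 1 - i - j)) = (diag_class i (int j) + 2) mod 3"
proof -
  obtain k where "n = 3 * k" using assms(2) by blast
  then have "int (n - 1 - i - j) - int j = (int j - int i + 2) + 3 * (int k - 1 - int j)"
    using assms(1) by simp
  then have "(int (n - 1 - i - j) - int j) mod 3 = (int j - int i + 2) mod 3"
    by (simp only: mod_mult_self2)
  also have "\<dots> = ((int j - int i) mod 3 + 2) mod 3"
    by (simp add: mod_add_left_eq)
  finally show ?thesis
    by (simp add: diag_class_def nat_add_distrib nat_mod_distrib)
qed

lemma level_rotate:
  assumes "i + j < n" and "n = 3 * M"
  shows "int M dvd level j (int (n - 1 - i - j)) - level i (int j)"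
proof -
  have k: "int (n - 1 - i - j) = 3 * int M - 1 - int i - int j"
    using assms by simp
  show ?thesis
  proof (cases "int j - int i" rule: int_mod3_cases)
    case (1 e)
    then have "level i (int j) = - e" "level j (int (n - 1 - i - j)) = - (int M + e)"
      using level_3e [of "int j" i e]
        level_3e2 [of "int (n - 1 - i - j)" j "int M - int j + e - 1"] k
      by simp_all
    then show ?thesis by simp
  next
    case (2 e)
    then have "level i (int j) = int j - e" "level j (int (n - 1 - i - j)) = - (int M - int j + e)"
      using level_3e1 [of "int j" i e] level_3e [of "int (n - 1 - i - j)" j "int M - int j + e"] k
      by simp_all
    then show ?thesis by simp
  next
    case (3 e)
    then have "level i (int j) = 2 * e + 1 - int j"
      "level j (int (n - 1 - i - j)) = 2 * int M - int j + 2 * e + 1"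
      using level_3e2 [of "int j" i e] level_3e1 [of "int (n - 1 - i - j)" j "int M - int j + e"] k
      by simp_all
    then show ?thesis by simp
  qed
qed

lemma card_triangle_class_rotate:
  assumes n: "n = 3 * M" and m: "m dvd int M"
  shows "card {(i, j). i + j < n \<and> diag_class i (int j) = (d + 1) mod 3
      \<and> level i (int j) mod m = r}
    = card {(i, j). i + j < n \<and> diag_class i (int j) = d mod 3 \<and> level i (int j) mod m = r}"
    (is "card (?S ((d + 1) mod 3)) = card (?S (d mod 3))")
proof (rule bij_betw_same_card [of "rotate_triangle n"],
    rule bij_betw_byWitness [where f' = "rotate_triangle n \<circ> rotate_triangle n"])
  have step: "rotate_triangle n p \<in> ?S ((c + 2) mod 3)" if p_in: "p \<in> ?S c" for p c
  proof -
    obtain i j where p: "p = (i, j)" "i + j < n" "diag_class i (int j) = c"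
      "level i (int j) mod m = r"
      using p_in by auto
    have "level j (int (n - 1 - i - j)) mod m = level i (int j) mod m"
      using dvd_trans [OF m level_rotate [OF p(2) n]] by (simp add: mod_eq_dvd_iff)
    moreover have "rotate_triangle n p = (j, n - 1 - i - j)" "j + (n - 1 - i - j) < n"
      using p(1,2) by (auto simp: rotate_triangle_def)
    moreover have "diag_class j (int (n - 1 - i - j)) = (c + 2) mod 3"
      using diag_class_rotate [OF p(2)] p(3) n by simp
    ultimately show ?thesis
      using p(4) by simp
  qed
  have cube: "rotate_triangle n (rotate_triangle n (rotate_triangle n (i, j))) = (i, j)"
    if "i + j < n" for i j
    using that by (simp add: rotate_triangle_def)
  show "\<forall>p \<in> ?S ((d + 1) mod 3). (rotate_triangle n \<circ> rotate_triangle n) (rotate_triangle n p) = p"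
    "\<forall>p \<in> ?S (d mod 3). rotate_triangle n ((rotate_triangle n \<circ> rotate_triangle n) p) = p"
    using cube by auto
  have mod1: "((d + 1) mod 3 + 2) mod 3 = d mod 3"
    and mod2: "((d mod 3 + 2) mod 3 + 2) mod 3 = (d + 1) mod 3"
    by presburger+
  show "rotate_triangle n ` ?S ((d + 1) mod 3) \<subseteq> ?S (d mod 3)"
  proof (rule image_subsetI)
    fix p assume "p \<in> ?S ((d + 1) mod 3)"
    from step [OF this] show "rotate_triangle n p \<in> ?S (d mod 3)" unfolding mod1 .
  qed
  show "(rotate_triangle n \<circ> rotate_triangle n) ` ?S (d mod 3) \<subseteq> ?S ((d + 1) mod 3)"
  proof (rule image_subsetI)
    fix p assume "p \<in> ?S (d mod 3)"
    from step [OF step [OF this]]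
    show "(rotate_triangle n \<circ> rotate_triangle n) p \<in> ?S ((d + 1) mod 3)"
      unfolding mod2 comp_apply .
  qed
qed

lemma card_triangle_class_level:
  assumes m: "m > 0" and odd: "odd m" and n: "n = 3 * (lam * nat m)" and d: "d < 3"
  shows "card {(i, j). i + j < n \<and> diag_class i (int j) = d \<and> level i (int j) mod m = r mod m}
    = card {(y, t) \<in> lattice_triangle (int lam * m). t mod m = 0}"
proof -
  let ?S = "\<lambda>d. {(i, j). i + j < n \<and> diag_class i (int j) = d \<and> level i (int j) mod m = r mod m}"
  have M: "int (lam * nat m) = int lam * m" using m by simp
  have rotate: "card (?S ((c + 1) mod 3)) = card (?S (c mod 3))" for c
    by (rule card_triangle_class_rotate [OF n]) (simp add: M)
  consider "d = 0" | "d = 1" | "d = 2" using d by linarith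
  then have "card (?S d) = card (?S 0)"
    by cases (use rotate [of 0] rotate [of 1] in \<open>simp_all add: numeral_2_eq_2\<close>)
  also have "\<dots> = card {(y, t) \<in> lattice_triangle (int lam * m). t mod m = r mod m}"
    using card_triangle_class0_level [OF n, of m "r mod m"] unfolding M .
  also have "\<dots> = card {(y, t) \<in> lattice_triangle (int lam * m). t mod m = 0}"
    by (rule card_lattice_triangle_residue [OF m odd refl])
  finally show ?thesis .
qed

lemma card_triangle_orbit_value:
  fixes m a1 a2 x s :: int
  assumes m: "m > 0" and odd: "odd m" and n: "n = 3 * (lam * nat m)" and x: "0 \<le> x" "x < m"
    and s: "s = 1 \<or> s = -1" and \<alpha>: "\<alpha> \<in> {0, 1}" and a2: "a2 = s * 3 ^ \<alpha> * 2 ^ \<beta>"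
    and gcd: "\<not> 3 dvd gcd a1 a2"
  shows "card {(i, j). i + j < n \<and> orbit_value a1 a2 i (int j) mod m = x}
    = 3 * card {(y, t) \<in> lattice_triangle (int lam * m). t mod m = 0}"
proof -
  define W where "W = card {(y, t) \<in> lattice_triangle (int lam * m). t mod m = 0}"
  define C where "C d = {(i, j). i + j < n \<and> diag_class i (int j) = d}" for d
  define R where "R c = card {r \<in> {0..<m}. (c + a2 * r) mod m = x}" for c
  let ?g = "\<lambda>(i, j). level i (int j)"
  let ?F = "\<lambda>d. {p \<in> C d. (a1 * A1 d + a2 * ?g p) mod m = x}"
  have finC: "finite (C d)" for d
    by (rule finite_subset [of _ "{..<n} \<times> {..<n}"]) (auto simp: C_def)
  have finF: "finite (?F d)" for d
    by (rule finite_subset [OF _ finC]) auto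
  have F: "card (?F d) = W * R (a1 * A1 d)" if "d < 3" for d
  proof (unfold R_def, rule card_affine_residue [OF finC m])
    fix r
    have "{p \<in> C d. ?g p mod m = r mod m}
        = {(i, j). i + j < n \<and> diag_class i (int j) = d \<and> level i (int j) mod m = r mod m}"
      by (auto simp: C_def)
    then show "card {p \<in> C d. ?g p mod m = r mod m} = W"
      unfolding W_def using card_triangle_class_level [OF m odd n that, of r] by simp
  qed
  have split:
    "{(i, j). i + j < n \<and> orbit_value a1 a2 i (int j) mod m = x} = (\<Union>d \<in> {..<3}. ?F d)"
    by (auto simp: C_def orbit_value_def diag_class_def)
  have "card {(i, j). i + j < n \<and> orbit_value a1 a2 i (int j) mod m = x}
      = (\<Sum>d<3. card (?F d))"
    unfolding split by (rule card_UN_disjoint) (use finF in \<open>auto simp: C_def\<close>)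
  also have "\<dots> = card (?F 0) + card (?F 1) + card (?F 2)"
    by (simp add: lessThan_nat_numeral)
  also have "\<dots> = W * (R a1 + R 0 + R (- a1))"
    using F [of 0] F [of 1] F [of 2] by (simp add: A1_def distrib_left)
  also have "\<dots> = 3 * W"
    using card_residue_sum_eq_3 [OF m odd x s \<alpha> a2 gcd] by (simp add: R_def)
  finally show ?thesis unfolding W_def .
qed

theorem corollary8:
  fixes A :: "nat \<Rightarrow> int" and m :: int
  assumes "A \<in> tuplesO" and "m > 0" and "odd m"
  shows "periodic_orbit m (IAP m (pim m A) (mulX24 m (pim m A))) (3 * m) (nat (3 * m))
       \<and> (\<forall>lam::nat. balanced m (prefix_seq (IAP m (pim m A) (mulX24 m (pim m A))) (lam * nat (3 * m))))"
proof -
  obtain a1 a2 :: int and \<alpha> \<beta> :: nat and s :: int where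
    s: "s = 1 \<or> s = -1" and \<alpha>: "\<alpha> \<in> {0, 1}" and a2: "a2 = s * 3 ^ \<alpha> * 2 ^ \<beta>"
    and gcd: "\<not> 3 dvd gcd a1 a2" and A: "A = (\<lambda>r. a1 * A1 r + a2 * A2 r)"
    using assms(1) unfolding tuplesO_def by blast
  define u where "u = IAP m (pim m A) (mulX24 m (pim m A))"
  have orbit: "orbit m u i j = orbit_value a1 a2 i j mod m" for i j
    by (rule orbit_eq_mod [where f = "orbit_value a1 a2", OF orbit_value_Suc])
      (simp add: u_def IAP_initial_row [OF A])
  have nat3m: "nat (3 * m) = 3 * nat m" and m_nat: "int (nat m) = m"
    using assms(2) by simp_all
  have "periodic_orbit m u (3 * m) (nat (3 * m))"
    unfolding periodic_orbit_def orbit nat3m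
    using orbit_value_add_row [of a1 a2 _ "nat m", unfolded m_nat] orbit_value_add_col by simp
  moreover have "balanced m (prefix_seq u (lam * nat (3 * m)))" for lam
  proof -
    define n where "n = lam * nat (3 * m)"
    have n3: "n = 3 * (lam * nat m)" by (simp add: n_def nat3m)
    have len: "length (prefix_seq u n) = n" by (simp add: prefix_seq_def)
    have "{(i, j). i + j < length (prefix_seq u n) \<and> tri m (prefix_seq u n) i j = x}
        = {(i, j). i + j < n \<and> orbit_value a1 a2 i (int j) mod m = x}" for x
      by (auto simp: len tri_prefix_seq orbit)
    then show ?thesis
      using card_triangle_orbit_value [OF assms(2,3) n3 _ _ s \<alpha> a2 gcd]
      unfolding balanced_def n_def [symmetric] by simp
  qed
  ultimately show ?thesis unfolding u_def by blast
qed

end
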